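(* Let $M$ be the monoid (algebra in sets) generated by $a,b,d,e,f,h,i,j,k,l,n,o,p$ subject to the relations $ba=ed$, $ea=fb$, $hb=id$, $jb=kd$, $oi=pk$, $ej=ph$, $le=ek=pi$, $nf=oh=pj$. Then $M$ is basic-set, i.e. for all $u,v,x\in M$, $ux=vx$ implies $u=v$.
   Context: For an associative algebra viewed as an operad concentrated in arity $1$, the basic-set condition (injectivity of $\nu\mapsto\gamma(\nu;\nu_1)$) is right cancellativity of the underlying monoid. *)

theory Defs
  imports Main
begin

datatype gen = Ga | Gb | Gd | Ge | Gf | Gh | Gi | Gj | Gk | Gl | Gn | Go | Gp

text \<open>Defining relations; a word x1 x2 ... is the list [x1, x2, ...] (product x1 * x2 * ...).\<close>
definition rels :: "(gen list \<times> gen list) set" where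
  "rels = {([Gb,Ga],[Ge,Gd]), ([Ge,Ga],[Gf,Gb]), ([Gh,Gb],[Gi,Gd]), ([Gj,Gb],[Gk,Gd]),
           ([Go,Gi],[Gp,Gk]), ([Ge,Gj],[Gp,Gh]),
           ([Gl,Ge],[Ge,Gk]), ([Ge,Gk],[Gp,Gi]),
           ([Gn,Gf],[Go,Gh]), ([Go,Gh],[Gp,Gj])}"

inductive wcong :: "gen list \<Rightarrow> gen list \<Rightarrow> bool" where
  step: "(l, r) \<in> rels \<Longrightarrow> wcong (u @ l @ v) (u @ r @ v)"
| refl: "wcong w w"
| sym: "wcong w w' \<Longrightarrow> wcong w' w"
| trans: "wcong w w' \<Longrightarrow> wcong w' w'' \<Longrightarrow> wcong w w''"

lemma wcong_equivp: "equivp wcong"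
  by (rule equivpI) (auto simp: reflp_def symp_def transp_def intro: wcong.intros)

lemma wcong_app: "wcong u u' \<Longrightarrow> wcong v v' \<Longrightarrow> wcong (u @ v) (u' @ v')"
proof -
  have L: "wcong u u' \<Longrightarrow> wcong (u @ v) (u' @ v)" for u u' v
  proof (induction rule: wcong.induct)
    case (step l r a b) then show ?case using wcong.step[of l r a "b @ v"] by simp
  qed (auto intro: wcong.intros)
  have R: "wcong v v' \<Longrightarrow> wcong (u @ v) (u @ v')" for u v v'
  proof (induction rule: wcong.induct)
    case (step l r a b) then show ?case using wcong.step[of l r "u @ a" b] by simp
  qed (auto intro: wcong.intros)
  assume "wcong u u'" "wcong v v'"
  then show ?thesis using L R wcong.trans by blast
qed

quotient_type M = "gen list" / wcong
  by (rule wcong_equivp)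

instantiation M :: monoid_mult
begin
lift_definition one_M :: M is "[]" .
lift_definition times_M :: "M \<Rightarrow> M \<Rightarrow> M" is "(@)" by (rule wcong_app)
instance by standard (transfer, simp add: wcong.refl)+
end

lift_definition gen :: "gen \<Rightarrow> M" is "\<lambda>x. [x]" .

end

theory Submission
  imports Defs
begin

text \<open>
  It suffices to cancel a single last letter. We show that every equality \<open>w x = w' y\<close> of
  words ending in letters \<open>x\<close>, \<open>y\<close> is explained either by \<open>x = y\<close> and \<open>w = w'\<close>, or by an
  entry \<open>(U, x, V, y)\<close> of a finite table of relations \<open>U x = V y\<close> with \<open>x \<noteq> y\<close>, via
  \<open>w = z U\<close> and \<open>w' = z V\<close>. The proof is by induction on the length of \<open>w\<close> and along a chain of
  elementary rewrites from \<open>w x\<close> to \<open>w' y\<close>. Only a rewrite of the last two letters needs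
  work: combining it with the current table entry, and using the induction hypothesis to
  split off the last letters of \<open>V\<close>, leads to finitely many configurations, each of which is
  closed by a bounded search through the rewriting graph. This closure of the table is checked
  by evaluation. For \<open>x = y\<close> only the first alternative remains, so \<open>w x = w' x\<close> gives \<open>w = w'\<close>.
\<close>

definition rel_quads :: "(gen \<times> gen \<times> gen \<times> gen) list" where
  "rel_quads = [(Gb,Ga,Ge,Gd), (Ge,Ga,Gf,Gb), (Gh,Gb,Gi,Gd), (Gj,Gb,Gk,Gd), (Go,Gi,Gp,Gk),
     (Ge,Gj,Gp,Gh), (Gl,Ge,Ge,Gk), (Ge,Gk,Gp,Gi), (Gn,Gf,Go,Gh), (Go,Gh,Gp,Gj)]"

definition rewrite_rules :: "(gen \<times> gen \<times> gen \<times> gen) list" where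
  "rewrite_rules = rel_quads @ map (\<lambda>(p, x, q, y). (q, y, p, x)) rel_quads"

lemma rels_or_converse_iff:
  "(l, r) \<in> rels \<or> (r, l) \<in> rels \<longleftrightarrow>
     (\<exists>p x q y. (p, x, q, y) \<in> set rewrite_rules \<and> l = [p, x] \<and> r = [q, y])"
proof -
  have rels_eq: "rels = (\<lambda>(p, x, q, y). ([p, x], [q, y])) ` set rel_quads"
    unfolding rels_def rel_quads_def by simp
  show ?thesis
    unfolding rels_eq rewrite_rules_def by force
qed

lemma wcong_append_right: "wcong w w' \<Longrightarrow> wcong (w @ v) (w' @ v)"
  using wcong_app wcong.refl by blast

lemma wcong_Cons: "wcong w w' \<Longrightarrow> wcong (a # w) (a # w')"
  using wcong_app[OF wcong.refl[of "[a]"]] by simp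

lemma wcong_rewrite_rule:
  assumes "(p, x, q, y) \<in> set rewrite_rules"
  shows "wcong (u @ [p, x] @ v) (u @ [q, y] @ v)"
proof -
  have "([p, x], [q, y]) \<in> rels \<or> ([q, y], [p, x]) \<in> rels"
    using assms rels_or_converse_iff by blast
  then show ?thesis by (metis wcong.step wcong.sym)
qed

definition rewrite_step :: "gen list \<Rightarrow> gen list \<Rightarrow> bool" where
  "rewrite_step W W' \<longleftrightarrow> (\<exists>u v p x q y. (p, x, q, y) \<in> set rewrite_rules \<and>
     W = u @ [p, x] @ v \<and> W' = u @ [q, y] @ v)"

lemma rewrite_rules_swap: "(p, x, q, y) \<in> set rewrite_rules \<Longrightarrow> (q, y, p, x) \<in> set rewrite_rules"
  using rels_or_converse_iff[of "[p, x]" "[q, y]"] rels_or_converse_iff[of "[q, y]" "[p, x]"]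
  by auto

lemma symp_rewrite_step: "symp rewrite_step"
  unfolding rewrite_step_def by (rule sympI) (blast dest: rewrite_rules_swap)

lemma wcong_imp_rewrites: "wcong W W' \<Longrightarrow> rewrite_step\<^sup>*\<^sup>* W W'"
proof (induction rule: wcong.induct)
  case (step l r u v)
  then obtain p x q y where "(p, x, q, y) \<in> set rewrite_rules" "l = [p, x]" "r = [q, y]"
    using rels_or_converse_iff[of l r] by blast
  then have "rewrite_step (u @ l @ v) (u @ r @ v)"
    unfolding rewrite_step_def by blast
  then show ?case by blast
next
  case (sym w w')
  then show ?case using sympD[OF symp_rtranclp[OF symp_rewrite_step]] by blast
qed auto

lemma rewrites_length: "rewrite_step\<^sup>*\<^sup>* W W' \<Longrightarrow> length W' = length W"
  by (induction rule: rtranclp_induct) (auto simp: rewrite_step_def)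

lemma wcong_length: "wcong W W' \<Longrightarrow> length W' = length W"
  by (rule rewrites_length[OF wcong_imp_rewrites])

fun rewrite_neighbours :: "gen list \<Rightarrow> gen list list" where
  "rewrite_neighbours (a # b # w) =
     [q # y # w. (p, x, q, y) \<leftarrow> rewrite_rules, p = a \<and> x = b] @
     map ((#) a) (rewrite_neighbours (b # w))"
| "rewrite_neighbours _ = []"

lemma wcong_rewrite_neighbours: "W' \<in> set (rewrite_neighbours W) \<Longrightarrow> wcong W W'"
proof (induction W arbitrary: W' rule: rewrite_neighbours.induct)
  case (1 a b w)
  then show ?case
    using wcong_rewrite_rule[of a b _ _ "[]" w] by (auto intro: wcong_Cons)
qed auto

fun rewrites_within :: "nat \<Rightarrow> gen list \<Rightarrow> gen list list" where
  "rewrites_within 0 W = [W]"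
| "rewrites_within (Suc k) W =
     remdups (rewrites_within k W @ concat (map rewrite_neighbours (rewrites_within k W)))"

lemma wcong_rewrites_within: "W' \<in> set (rewrites_within k W) \<Longrightarrow> wcong W W'"
  by (induction k arbitrary: W') (auto intro: wcong.refl wcong.trans wcong_rewrite_neighbours)

text \<open>Each entry \<open>(U, x, V, y)\<close> is a relation \<open>U x = V y\<close> of the monoid, but soundness never
  needs this: only \<open>x \<noteq> y\<close> and the closure checked below are used.\<close>

definition complement_table :: "(gen list \<times> gen \<times> gen list \<times> gen) list" where
  "complement_table = map (\<lambda>(p, x, q, y). ([p], x, [q], y)) rewrite_rules @
     [([Gl],Ge,[Gp],Gi), ([Gp],Gi,[Gl],Ge), ([Gn],Gf,[Gp],Gj), ([Gp],Gj,[Gn],Gf),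
      ([Ge,Gj],Gb,[Gl,Gb],Ga), ([Gl,Gb],Ga,[Ge,Gj],Gb),
      ([Go,Gi],Gd,[Gn,Ge],Ga), ([Gn,Ge],Ga,[Go,Gi],Gd)]"

definition last_letter_split :: "gen list \<Rightarrow> gen \<Rightarrow> gen list \<Rightarrow> gen \<Rightarrow> bool" where
  "last_letter_split w x w' y \<longleftrightarrow> (x = y \<and> wcong w w') \<or>
     (\<exists>U V z. (U, x, V, y) \<in> set complement_table \<and> wcong w (z @ U) \<and> wcong w' (z @ V))"

lemma last_letter_split_cong:
  "last_letter_split w x w' y \<Longrightarrow> wcong v w \<Longrightarrow> wcong v' w' \<Longrightarrow> last_letter_split v x v' y"
  unfolding last_letter_split_def by (meson wcong.trans wcong.sym)

lemma last_letter_split_prepend: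
  assumes "last_letter_split w x w' y"
  shows "last_letter_split (t @ w) x (t @ w') y"
  using assms wcong_app[OF wcong.refl[of t]] unfolding last_letter_split_def
  by (metis append.assoc)

definition last_letter_split_test :: "gen list \<Rightarrow> gen \<Rightarrow> gen list \<Rightarrow> gen \<Rightarrow> bool" where
  "last_letter_split_test A x B y \<longleftrightarrow>
     (let As = rewrites_within 2 A; Bs = rewrites_within 2 B in
      (x = y \<and> B \<in> set As) \<or>
      (\<exists>(U, x', V, y') \<in> set complement_table. x' = x \<and> y' = y \<and>
         (\<exists>C \<in> set As. drop (length C - length U) C = U \<and>
            take (length C - length U) C @ V \<in> set Bs)))"

lemma last_letter_split_test_sound:
  assumes "last_letter_split_test A x B y"
  shows "last_letter_split A x B y"
proof -
  consider "x = y" "B \<in> set (rewrites_within 2 A)"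
    | U V C where "(U, x, V, y) \<in> set complement_table" "C \<in> set (rewrites_within 2 A)"
        "drop (length C - length U) C = U"
        "take (length C - length U) C @ V \<in> set (rewrites_within 2 B)"
    using assms unfolding last_letter_split_test_def Let_def by blast
  then show ?thesis
  proof cases
    case 1
    then show ?thesis by (simp add: last_letter_split_def wcong_rewrites_within)
  next
    case 2
    let ?z = "take (length C - length U) C"
    have "wcong A (?z @ U)"
      using wcong_rewrites_within[OF 2(2)] 2(3) by (metis append_take_drop_id)
    moreover have "wcong B (?z @ V)"
      using wcong_rewrites_within[OF 2(4)] .
    ultimately show ?thesis
      using 2(1) unfolding last_letter_split_def by blast
  qed
qed

lemma last_letter_split_from_test:
  "last_letter_split_test A x B y \<Longrightarrow> wcong w (t @ A) \<Longrightarrow> wcong w' (t @ B) \<Longrightarrow>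
     last_letter_split w x w' y"
  by (blast intro: last_letter_split_cong last_letter_split_prepend last_letter_split_test_sound)

text \<open>For an entry \<open>(U, x, V, x')\<close> with \<open>w = z U\<close>, \<open>u p = z V\<close>, and a rule rewriting the final
  \<open>p x'\<close> of \<open>u p x'\<close> to \<open>q y\<close>, these are the tests for each way the induction hypothesis can split
  \<open>u p = z V\<close>. Guards are written as \<open>if \<dots> else True\<close> so that evaluation skips vacuous tests.\<close>

definition closes_single :: "gen list \<Rightarrow> gen \<Rightarrow> gen \<Rightarrow> gen \<Rightarrow> gen \<Rightarrow> gen \<Rightarrow> bool" where
  "closes_single U x v p q y \<longleftrightarrow>
     (if p = v then last_letter_split_test U x [q] y else True) \<and>
     (\<forall>(R, p', S, v') \<in> set complement_table.
        if p' = p \<and> v' = v then last_letter_split_test (S @ U) x (R @ [q]) y else True)"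

definition closes_double :: "gen list \<Rightarrow> gen \<Rightarrow> gen \<Rightarrow> gen \<Rightarrow> gen \<Rightarrow> gen \<Rightarrow> gen \<Rightarrow> bool" where
  "closes_double U x v' v p q y \<longleftrightarrow>
     (if p = v then last_letter_split_test U x [v', q] y else True) \<and>
     (\<forall>(R, p', S, v'') \<in> set complement_table. if p' = p \<and> v'' = v then
        (case S of
          [s] \<Rightarrow> (if v' = s then last_letter_split_test U x (R @ [q]) y else True) \<and>
                (\<forall>(R', a, S', b) \<in> set complement_table.
                   if a = v' \<and> b = s then last_letter_split_test (R' @ U) x (S' @ R @ [q]) y
                   else True)
        | _ \<Rightarrow> False)
        else True)"

definition table_closed :: bool where
  "table_closed \<longleftrightarrow> (\<forall>(U, x, V, x') \<in> set complement_table. x \<noteq> x' \<and>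
     (\<forall>(p, x'', q, y) \<in> set rewrite_rules. if x'' = x' then
        (case V of
          [v] \<Rightarrow> closes_single U x v p q y
        | [v', v] \<Rightarrow> closes_double U x v' v p q y
        | _ \<Rightarrow> False)
        else True))"

lemma complement_table_closed: table_closed
  by code_simp

lemma complement_table_last_letters_differ: "(U, x, V, y) \<in> set complement_table \<Longrightarrow> x \<noteq> y"
  using complement_table_closed unfolding table_closed_def by fastforce

lemma complement_table_closes:
  assumes "(U, x, V, x') \<in> set complement_table" and "(p, x', q, y) \<in> set rewrite_rules"
  shows "(\<exists>v. V = [v] \<and> closes_single U x v p q y) \<or>
    (\<exists>v' v. V = [v', v] \<and> closes_double U x v' v p q y)"
  using complement_table_closed assms unfolding table_closed_def
  by (fastforce split: list.splits)

definition splits_below :: "nat \<Rightarrow> bool" where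
  "splits_below n \<longleftrightarrow> (\<forall>w x w' y. length w < n \<longrightarrow> wcong (w @ [x]) (w' @ [y]) \<longrightarrow>
     last_letter_split w x w' y)"

lemma splits_belowD:
  "splits_below n \<Longrightarrow> length w < n \<Longrightarrow> wcong (w @ [x]) (w' @ [y]) \<Longrightarrow>
     last_letter_split w x w' y"
  unfolding splits_below_def by blast

lemma last_letter_split_single:
  assumes below: "splits_below n" and "length u < n" and closes: "closes_single U x v p q y"
    and w: "wcong w (z @ U)" and u: "wcong (u @ [p]) (z @ [v])"
  shows "last_letter_split w x (u @ [q]) y"
proof -
  from splits_belowD[OF below \<open>length u < n\<close> u]
  consider "p = v" "wcong u z"
    | R S z' where "(R, p, S, v) \<in> set complement_table" "wcong u (z' @ R)" "wcong z (z' @ S)"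
    unfolding last_letter_split_def by blast
  then show ?thesis
  proof cases
    case 1
    have "last_letter_split_test U x [q] y"
      using closes 1(1) by (simp add: closes_single_def)
    moreover have "wcong (u @ [q]) (z @ [q])"
      using 1(2) by (rule wcong_append_right)
    ultimately show ?thesis
      using w by (blast intro: last_letter_split_from_test)
  next
    case 2
    have "last_letter_split_test (S @ U) x (R @ [q]) y"
      using closes 2(1) unfolding closes_single_def by fastforce
    moreover have "wcong w (z' @ S @ U)"
      using wcong.trans[OF w wcong_append_right[OF 2(3)]] by simp
    moreover have "wcong (u @ [q]) (z' @ R @ [q])"
      using wcong_append_right[OF 2(2)] by simp
    ultimately show ?thesis
      by (rule last_letter_split_from_test)
  qed
qed

lemma closes_doubleD:
  assumes "closes_double U x v' v p q y" and "(R, p, S, v) \<in> set complement_table"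
  shows "\<exists>s. S = [s] \<and> (v' = s \<longrightarrow> last_letter_split_test U x (R @ [q]) y) \<and>
    (\<forall>R' S'. (R', v', S', s) \<in> set complement_table \<longrightarrow>
      last_letter_split_test (R' @ U) x (S' @ R @ [q]) y)"
  using assms unfolding closes_double_def by (fastforce split: list.splits)

lemma last_letter_split_double:
  assumes below: "splits_below n" and "length u < n" and closes: "closes_double U x v' v p q y"
    and w: "wcong w (z @ U)" and u: "wcong (u @ [p]) (z @ [v', v])"
  shows "last_letter_split w x (u @ [q]) y"
proof -
  from splits_belowD[OF below \<open>length u < n\<close>, of p "z @ [v']" v] u
  consider "p = v" "wcong u (z @ [v'])"
    | R S z' where "(R, p, S, v) \<in> set complement_table" "wcong u (z' @ R)"
      "wcong (z @ [v']) (z' @ S)"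
    unfolding last_letter_split_def by auto
  then show ?thesis
  proof cases
    case 1
    have "last_letter_split_test U x [v', q] y"
      using closes 1(1) by (simp add: closes_double_def)
    moreover have "wcong (u @ [q]) (z @ [v', q])"
      using wcong_append_right[OF 1(2), of "[q]"] by simp
    ultimately show ?thesis
      using w by (blast intro: last_letter_split_from_test)
  next
    case 2
    obtain s where S: "S = [s]" and test_eq: "v' = s \<Longrightarrow> last_letter_split_test U x (R @ [q]) y"
      and test_table: "\<And>R' S'. (R', v', S', s) \<in> set complement_table \<Longrightarrow>
        last_letter_split_test (R' @ U) x (S' @ R @ [q]) y"
      using closes_doubleD[OF closes 2(1)] by blast
    have uq: "wcong (u @ [q]) (z' @ R @ [q])"
      using wcong_append_right[OF 2(2)] by simp
    have "length z < n"
      using wcong_length[OF u] \<open>length u < n\<close> by simp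
    from splits_belowD[OF below this, of v' z' s] 2(3) S
    consider "v' = s" "wcong z z'"
      | R' S' z'' where "(R', v', S', s) \<in> set complement_table" "wcong z (z'' @ R')"
        "wcong z' (z'' @ S')"
      unfolding last_letter_split_def by auto
    then show ?thesis
    proof cases
      case 1
      have "wcong w (z' @ U)"
        using wcong.trans[OF w wcong_append_right[OF 1(2)]] .
      then show ?thesis
        using test_eq[OF 1(1)] uq by (blast intro: last_letter_split_from_test)
    next
      case 2
      have "wcong w (z'' @ R' @ U)"
        using wcong.trans[OF w wcong_append_right[OF 2(2)]] by simp
      moreover have "wcong (u @ [q]) (z'' @ S' @ R @ [q])"
        using wcong.trans[OF uq wcong_append_right[OF 2(3)]] by simp
      ultimately show ?thesis
        using test_table[OF 2(1)] by (blast intro: last_letter_split_from_test)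
    qed
  qed
qed

lemma last_letter_split_rewrite_last:
  assumes below: "splits_below n" and "length u < n"
    and split: "last_letter_split w x (u @ [p]) x'" and rule: "(p, x', q, y) \<in> set rewrite_rules"
  shows "last_letter_split w x (u @ [q]) y"
proof -
  from split consider "x = x'" "wcong w (u @ [p])"
    | U V z where "(U, x, V, x') \<in> set complement_table" "wcong w (z @ U)" "wcong (u @ [p]) (z @ V)"
    unfolding last_letter_split_def by blast
  then show ?thesis
  proof cases
    case 1
    have "([p], x, [q], y) \<in> set complement_table"
      using rule 1(1) unfolding complement_table_def by force
    then show ?thesis
      using 1(2) wcong.refl unfolding last_letter_split_def by blast
  next
    case 2
    from complement_table_closes[OF 2(1) rule] show ?thesis
      using last_letter_split_single[OF below \<open>length u < n\<close> _ 2(2)]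
        last_letter_split_double[OF below \<open>length u < n\<close> _ 2(2)] 2(3)
      by auto
  qed
qed

lemma last_letter_split_rewrite:
  assumes below: "splits_below (length w)" and len: "length w' = length w"
    and split: "last_letter_split w x w' y" and step: "rewrite_step (w' @ [y]) (w'' @ [y''])"
  shows "last_letter_split w x w'' y''"
proof -
  obtain u v p x' q y' where rule: "(p, x', q, y') \<in> set rewrite_rules"
    and before: "w' @ [y] = u @ [p, x'] @ v" and after: "w'' @ [y''] = u @ [q, y'] @ v"
    using step unfolding rewrite_step_def by blast
  show ?thesis
  proof (cases v rule: rev_cases)
    case Nil
    then have "w' = u @ [p]" "y = x'" "w'' = u @ [q]" "y'' = y'"
      using before after by auto
    then show ?thesis
      using last_letter_split_rewrite_last[OF below _ _ rule] split len by simp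
  next
    case (snoc v' c)
    then have "w' = u @ [p, x'] @ v'" "w'' = u @ [q, y'] @ v'" "y'' = y"
      using before after by auto
    moreover have "wcong (u @ [q, y'] @ v') (u @ [p, x'] @ v')"
      using wcong.sym[OF wcong_rewrite_rule[OF rule]] .
    ultimately show ?thesis
      using last_letter_split_cong[OF split wcong.refl] by simp
  qed
qed

lemma last_letter_split_complete: "wcong (w @ [x]) (w' @ [y]) \<Longrightarrow> last_letter_split w x w' y"
proof (induction "length w" arbitrary: w x w' y rule: less_induct)
  case less
  have below: "splits_below (length w)"
    unfolding splits_below_def using less.hyps by blast
  have "last_letter_split w x (butlast W) (last W)" if "rewrite_step\<^sup>*\<^sup>* (w @ [x]) W" for W
    using that
  proof (induction rule: rtranclp_induct)
    case base
    then show ?case by (simp add: last_letter_split_def wcong.refl)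
  next
    case (step W W')
    have "W \<noteq> []" "W' \<noteq> []"
      using step.hyps(2) by (auto simp: rewrite_step_def)
    then have "rewrite_step (butlast W @ [last W]) (butlast W' @ [last W'])"
      using step.hyps(2) by simp
    moreover have "length (butlast W) = length w"
      using rewrites_length[OF step.hyps(1)] by simp
    ultimately show ?case
      using last_letter_split_rewrite[OF below _ step.IH] by blast
  qed
  from this[OF wcong_imp_rewrites[OF less.prems]] show ?case by simp
qed

lemma wcong_cancel_last: "wcong (w @ [x]) (w' @ [x]) \<Longrightarrow> wcong w w'"
  using last_letter_split_complete complement_table_last_letters_differ
  unfolding last_letter_split_def by blast

lemma wcong_cancel_right: "wcong (w @ v) (w' @ v) \<Longrightarrow> wcong w w'"
proof (induction v arbitrary: w w' rule: rev_induct)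
  case (snoc x v)
  then show ?case using wcong_cancel_last[of "w @ v" x "w' @ v"] by simp
qed simp

theorem mainTheorem11:
  fixes u v x :: M
  assumes "u * x = v * x"
  shows "u = v"
  using assms by transfer (rule wcong_cancel_right)

end
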